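(* Let $(f_0, M_0, \Lambda_0, \mathcal{Q}_0)$ be a SIMDG with training distribution $P_{\mathrm{tr}}$, and let $q$, $R$, $\gamma_0$, $f_\star$ and identifiability be as in the context. Suppose that one of the following two conditions holds. (A) $\mathcal{G}$ is the class of linear functions $\mathbb{R}^p\to\mathbb{R}$ and $\mathcal{F}$ is the class of all measurable functions $\mathbb{R}^p\to\mathbb{R}$; under $P_{\mathrm{tr}}$, $Z$ takes values in a finite set $\mathcal{Z}\subseteq\mathbb{R}^r$ with $P_{\mathrm{tr}}(Z=z)>0$ for all $z\in\mathcal{Z}$, $\mathrm{E}_{P_{\mathrm{tr}}}[Z]=0$ and $\mathrm{E}_{P_{\mathrm{tr}}}[ZZ^\top]\succ 0$; $\gamma_0$ is linear; and there exist $z_1,\tilde z_1,\dots,z_q,\tilde z_q\in\mathcal{Z}$ such that for every $j\in\{1,\dots,q\}$ the distributions $P_{\mathrm{tr}}^{V+M_0 z_j}$ and $P_{\mathrm{tr}}^{V+M_0\tilde z_j}$ are not mutually singular, and $\mathrm{span}\{M_0(z_j-\tilde z_j): j=1,\dots,q\}=\mathrm{im}(M_0)$. (B) $\mathcal{F}$ and $\mathcal{G}$ are each the class of differentiable functions $\mathbb{R}^p\to\mathbb{R}$; the boundary of the support of $(V,Z)$ under $P_{\mathrm{tr}}$ has $P_{\mathrm{tr}}$-probability zero, and the interior of this support is convex; and $f_0$ and $\gamma_0$ are differentiable. Then the BCF $f_\star$ is identifiable from $P_{\mathrm{tr}}$ (with respect to the corresponding $\mathcal{F}$ and $\mathcal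{G}$).
   Context: Fix integers $p,r\ge 1$. A SIMDG is a tuple $(f_0, M_0, \Lambda_0, \mathcal{Q}_0)$ where $f_0:\mathbb{R}^p\to\mathbb{R}$ is measurable, $M_0\in\mathbb{R}^{p\times r}$, $\Lambda_0$ is a distribution on $\mathbb{R}^{1+p}$ such that $(U,V)\sim\Lambda_0$ satisfies $\mathrm{E}[(U,V)]=0$ and $\mathrm{E}[\|(U,V)\|_2^2]<\infty$, and $\mathcal{Q}_0$ is a set of distributions on $\mathbb{R}^r$. For each $Q\in\mathcal{Q}_0$ the model induces a distribution $P$ of $(U,V,X,Y,Z)$ by drawing $((U,V),Z)\sim\Lambda_0\otimes Q$ and setting $X = M_0 Z + V$, $Y = f_0(X)+U$; $\mathcal{P}_0$ is the set of all such induced distributions. Standing setting: $\sup_{P\in\mathcal{P}_0}\mathrm{E}_P[f_0(X)]^2<\infty$; $Q_{\mathrm{tr}}\in\mathcal{Q}_0$ satisfies $\mathrm{E}_{Q_{\mathrm{tr}}}[Z]=0$ and $\mathrm{E}_{Q_{\mathrm{tr}}}[ZZ^\top]\succ 0$; $P_{\mathrm{tr}}$ is the distribution induced by $Q_{\mathrm{tr}}$. $P_{\mathrm{tr}}^{W}$ denotes the distribution of a random variable $W$ under $P_{\mathrm{tr}}$. Let $q=\mathrm{rank}(M_0)$; if $q<p$, $R\in\mathbb{R}^{p\times(p-q)}$ has columns forming an orthonormal basis of $\ker(M_0^\top)$, and if $q=p$, $R$ is the zero vector in $\mathbb{R}^{p\times 1}$. $\gamma_0(v):=\mathrm{E}_{P_{\mathrm{tr}}}[U\mid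 V=v]$. The BCF is $f_\star(x):=f_0(x)+\mathrm{E}_{P_{\mathrm{tr}}}[\gamma_0(V)\mid R^\top X = R^\top x]$ for $P_{\mathrm{tr}}$-a.e. $x$. Identifiability: given classes $\mathcal{F},\mathcal{G}$ of measurable functions with $f_0\in\mathcal{F}$, $\gamma_0\in\mathcal{G}$, $f_\star$ is identifiable from $P_{\mathrm{tr}}$ if for all $f\in\mathcal{F}$, $\gamma\in\mathcal{G}$: whenever $\mathrm{E}_{P_{\mathrm{tr}}}[Y\mid X,V]=f(X)+\gamma(V)$ $P_{\mathrm{tr}}$-a.s., then $f_\star(X)=f(X)+\mathrm{E}_{P_{\mathrm{tr}}}[\gamma(V)\mid R^\top X]$ $P_{\mathrm{tr}}$-a.s. if $q<p$, and $f_\star(X)=f(X)+\mathrm{E}_{P_{\mathrm{tr}}}[\gamma(V)]$ $P_{\mathrm{tr}}$-a.s. if $q=p$. Two probability measures $\mu,\nu$ are mutually singular if there is a measurable $E$ with $\mu(E^c)=\nu(E)=0$. *)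

theory Defs
  imports "HOL-Probability.Probability"
begin

type_synonym ('p, 'r) obs = "real \<times> (real^'p) \<times> (real^'p) \<times> real \<times> (real^'r)"

definition obsU :: "('p::finite, 'r::finite) obs \<Rightarrow> real" where
  "obsU w = fst w"
definition obsV :: "('p::finite, 'r::finite) obs \<Rightarrow> real^'p" where
  "obsV w = fst (snd w)"
definition obsX :: "('p::finite, 'r::finite) obs \<Rightarrow> real^'p" where
  "obsX w = fst (snd (snd w))"
definition obsY :: "('p::finite, 'r::finite) obs \<Rightarrow> real" where
  "obsY w = fst (snd (snd (snd w)))"
definition obsZ :: "('p::finite, 'r::finite) obs \<Rightarrow> real^'r" where
  "obsZ w = snd (snd (snd (snd w)))"

text \<open>A SIMDG (f0, M0, Lambda0, Q0). Lambda0 is the law of (U,V), centred with finite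
  second moment; every Q in Q0 is a probability distribution on R^r.\<close>

definition is_SIMDG ::
  "(real^'p::finite \<Rightarrow> real) \<Rightarrow> real^'r::finite^'p \<Rightarrow> (real \<times> (real^'p)) measure
     \<Rightarrow> (real^'r) measure set \<Rightarrow> bool" where
  "is_SIMDG f0 M0 Lam Q0 \<longleftrightarrow>
     f0 \<in> borel_measurable borel \<and>
     prob_space Lam \<and> sets Lam = sets borel \<and>
     integrable Lam (\<lambda>w. w) \<and> integral\<^sup>L Lam (\<lambda>w. w) = 0 \<and>
     integrable Lam (\<lambda>w. norm w ^ 2) \<and>
     (\<forall>Q\<in>Q0. prob_space Q \<and> sets Q = sets borel)"

definition induced_dist ::
  "(real^'p::finite \<Rightarrow> real) \<Rightarrow> real^'r::finite^'p \<Rightarrow> (real \<times> (real^'p)) measure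
     \<Rightarrow> (real^'r) measure \<Rightarrow> ('p, 'r) obs measure" where
  "induced_dist f0 M0 Lam Q =
     distr (Lam \<Otimes>\<^sub>M Q) borel
       (\<lambda>((u, v), z). (u, v, M0 *v z + v, f0 (M0 *v z + v) + u, z))"

definition second_moment_matrix :: "(real^'r::finite) measure \<Rightarrow> real^'r^'r" where
  "second_moment_matrix Q = (\<chi> i j. \<integral>z. z $ i * z $ j \<partial>Q)"

definition pos_def_matrix :: "real^'n::finite^'n \<Rightarrow> bool" where
  "pos_def_matrix S \<longleftrightarrow> transpose S = S \<and> (\<forall>a. a \<noteq> 0 \<longrightarrow> a \<bullet> (S *v a) > 0)"

definition cond_exp_given ::
  "'a measure \<Rightarrow> ('a \<Rightarrow> 'b::topological_space) \<Rightarrow> ('a \<Rightarrow> real) \<Rightarrow> 'a \<Rightarrow> real" where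
  "cond_exp_given P W Y = real_cond_exp P (vimage_algebra (space P) W borel) Y"

definition mutually_singular :: "'a measure \<Rightarrow> 'a measure \<Rightarrow> bool" where
  "mutually_singular \<mu> \<nu> \<longleftrightarrow>
     (\<exists>E \<in> sets \<mu>. emeasure \<mu> (space \<mu> - E) = 0 \<and> emeasure \<nu> E = 0)"

definition measure_support :: "'a::topological_space measure \<Rightarrow> 'a set" where
  "measure_support \<mu> = {x. \<forall>A. open A \<longrightarrow> x \<in> A \<longrightarrow> emeasure \<mu> A > 0}"

definition is_gamma0 :: "('p::finite, 'r::finite) obs measure \<Rightarrow> (real^'p \<Rightarrow> real) \<Rightarrow> bool" where
  "is_gamma0 P g \<longleftrightarrow> g \<in> borel_measurable borel \<and>
     (AE w in P. g (obsV w) = cond_exp_given P obsV obsU w)"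

definition is_BCF ::
  "('p::finite, 'r::finite) obs measure \<Rightarrow> (real^'p \<Rightarrow> real) \<Rightarrow> (real^'p \<Rightarrow> real)
     \<Rightarrow> real^'k::finite^'p \<Rightarrow> (real^'p \<Rightarrow> real) \<Rightarrow> bool" where
  "is_BCF P f0 g0 R fs \<longleftrightarrow>
     (AE w in P. fs (obsX w) = f0 (obsX w)
        + cond_exp_given P (\<lambda>w. transpose R *v obsX w) (\<lambda>w. g0 (obsV w)) w)"

definition BCF_identifiable ::
  "('p::finite, 'r::finite) obs measure \<Rightarrow> real^'r^'p \<Rightarrow> real^'k::finite^'p
     \<Rightarrow> (real^'p \<Rightarrow> real) set \<Rightarrow> (real^'p \<Rightarrow> real) set
     \<Rightarrow> (real^'p \<Rightarrow> real) \<Rightarrow> bool" where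
  "BCF_identifiable P M0 R F G fs \<longleftrightarrow>
     (\<forall>f\<in>F. \<forall>g\<in>G.
        (AE w in P. cond_exp_given P (\<lambda>w. (obsX w, obsV w)) obsY w = f (obsX w) + g (obsV w))
        \<longrightarrow> (if rank M0 < CARD('p) then
               (AE w in P. fs (obsX w) = f (obsX w)
                  + cond_exp_given P (\<lambda>w. transpose R *v obsX w) (\<lambda>w. g (obsV w)) w)
             else
               (AE w in P. fs (obsX w) = f (obsX w) + (\<integral>w'. g (obsV w') \<partial>P))))"

definition valid_R :: "real^'r::finite^'p::finite \<Rightarrow> real^'k::finite^'p \<Rightarrow> bool" where
  "valid_R M0 R \<longleftrightarrow>
     (if rank M0 < CARD('p) then
        CARD('k) = CARD('p) - rank M0 \<and> transpose R ** R = mat 1 \<and>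
        span (columns R) = {v. transpose M0 *v v = 0}
      else CARD('k) = 1 \<and> R = 0)"

text \<open>Condition (A) of the proposition (P is the training distribution P_tr, q = rank M0).\<close>

definition condition_A ::
  "('p::finite, 'r::finite) obs measure \<Rightarrow> real^'r^'p \<Rightarrow> (real^'p \<Rightarrow> real) \<Rightarrow> bool" where
  "condition_A P M0 g0 \<longleftrightarrow>
     (\<exists>ZZ :: (real^'r) set. finite ZZ \<and>
        (AE w in P. obsZ w \<in> ZZ) \<and>
        (\<forall>z\<in>ZZ. measure P {w \<in> space P. obsZ w = z} > 0) \<and>
        linear g0 \<and>
        (\<exists>zs zs' :: nat \<Rightarrow> real^'r.
           (\<forall>j\<in>{1..rank M0}. zs j \<in> ZZ \<and> zs' j \<in> ZZ \<and>
              \<not> mutually_singular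
                  (distr P borel (\<lambda>w. obsV w + M0 *v zs j))
                  (distr P borel (\<lambda>w. obsV w + M0 *v zs' j))) \<and>
           span ((\<lambda>j. M0 *v (zs j - zs' j)) ` {1..rank M0}) = range (\<lambda>z. M0 *v z)))"

definition condition_B ::
  "('p::finite, 'r::finite) obs measure \<Rightarrow> (real^'p \<Rightarrow> real) \<Rightarrow> (real^'p \<Rightarrow> real) \<Rightarrow> bool" where
  "condition_B P f0 g0 \<longleftrightarrow>
     (let S = measure_support (distr P borel (\<lambda>w. (obsV w, obsZ w)))
      in measure P {w \<in> space P. (obsV w, obsZ w) \<in> frontier S} = 0 \<and>
         convex (interior S) \<and>
         (\<forall>x. f0 differentiable (at x)) \<and> (\<forall>x. g0 differentiable (at x)))"

definition differentiable_fns :: "(real^'p::finite \<Rightarrow> real) set" where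
  "differentiable_fns = {f. \<forall>x. f differentiable (at x)}"

end

theory Submission
  imports Defs
begin

(*
  Because Z is independent of (U, V), E[Y | X, V] = f0(X) + gamma0(V).  Hence any decomposition
  E[Y | X, V] = f(X) + g(V) yields h(M0 Z + V) = k(V) almost surely, with h = f0 - f and k = g - gamma0.
  Under (A), k is linear; evaluating the identity at two atoms z, z' of Z whose shifted laws of V
  overlap gives k(M0 (z - z')) = 0, and these directions span im M0.  Under (B), continuity extends
  the identity to the support of (V, Z); on the image of its open convex interior h is then
  invariant under translations by im M0.  Since ker R^T is contained in im M0, in both cases
  h(X) = psi(R^T X) almost surely for a Borel function psi, so that
  E[g(V) | R^T X] = E[gamma0(V) | R^T X] + h(X), which turns the defining formula of the BCF for f0
  into the one for f.  If M0 has full rank, then R = 0 and the conditional expectation is the mean.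
*)

lemma borel_measurable_linear:
  fixes f :: "'a::euclidean_space \<Rightarrow> 'b::euclidean_space"
  shows "linear f \<Longrightarrow> f \<in> borel_measurable borel"
  by (intro borel_measurable_continuous_onI linear_continuous_on linear_conv_bounded_linear[THEN iffD1])

lemma borel_measurable_matrix_vector_mult [measurable]:
  "(\<lambda>z. (M::real^'a::finite^'b::finite) *v z) \<in> borel_measurable borel"
  by (rule borel_measurable_linear[OF matrix_vector_mul_linear])

lemma continuous_on_differentiable_fns: "f \<in> differentiable_fns \<Longrightarrow> continuous_on UNIV f"
  unfolding differentiable_fns_def
  by (auto intro!: continuous_at_imp_continuous_on differentiable_imp_continuous_within)

lemma borel_measurable_fst [measurable]:
  "fst \<in> (borel :: ('a::second_countable_topology \<times> 'b::second_countable_topology) measure) \<rightarrow>\<^sub>M borel"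
  by (intro borel_measurable_continuous_onI continuous_on_fst continuous_on_id)

lemma borel_measurable_snd [measurable]:
  "snd \<in> (borel :: ('a::second_countable_topology \<times> 'b::second_countable_topology) measure) \<rightarrow>\<^sub>M borel"
  by (intro borel_measurable_continuous_onI continuous_on_snd continuous_on_id)

lemma borel_measurable_obs [measurable]:
  "obsU \<in> (borel::('p::finite,'r::finite) obs measure) \<rightarrow>\<^sub>M borel"
  "obsV \<in> (borel::('p::finite,'r::finite) obs measure) \<rightarrow>\<^sub>M borel"
  "obsX \<in> (borel::('p::finite,'r::finite) obs measure) \<rightarrow>\<^sub>M borel"
  "obsY \<in> (borel::('p::finite,'r::finite) obs measure) \<rightarrow>\<^sub>M borel"
  "obsZ \<in> (borel::('p::finite,'r::finite) obs measure) \<rightarrow>\<^sub>M borel"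
  unfolding obsU_def[abs_def] obsV_def[abs_def] obsX_def[abs_def] obsY_def[abs_def] obsZ_def[abs_def]
  by measurable

lemma sigma_finite_subalgebra_vimage_algebra:
  assumes "prob_space P" and "W \<in> P \<rightarrow>\<^sub>M (borel::'b::topological_space measure)"
  shows "sigma_finite_subalgebra P (vimage_algebra (space P) W borel)"
proof -
  interpret prob_space P by fact
  have "subalgebra P (vimage_algebra (space P) W borel)"
    using assms(2) by (auto simp: subalgebra_def sets_vimage_algebra2 measurable_sets)
  then show ?thesis
    by (intro finite_measure_subalgebra_is_sigma_finite)
      (simp add: finite_measure_subalgebra_def finite_measure_subalgebra_axioms_def finite_measure_axioms)
qed

lemma real_cond_exp_vimage_algebra_const:
  assumes "prob_space P" and W: "\<And>w. w \<in> space P \<Longrightarrow> W w = c" and Y: "integrable P Y"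
  shows "AE w in P. real_cond_exp P (vimage_algebra (space P) W (borel::'b::topological_space measure)) Y w
    = (\<integral>w. Y w \<partial>P)"
proof -
  interpret prob_space P by fact
  have "W \<in> P \<rightarrow>\<^sub>M borel"
    using W by (subst measurable_cong[where g="\<lambda>_. c"]) auto
  then interpret sigma_finite_subalgebra P "vimage_algebra (space P) W borel"
    by (rule sigma_finite_subalgebra_vimage_algebra[OF assms(1)])
  show ?thesis
  proof (rule real_cond_exp_charact)
    fix A assume "A \<in> sets (vimage_algebra (space P) W borel)"
    then have "A = {} \<or> A = space P"
      using W by (auto simp: sets_vimage_algebra2)
    then show "(\<integral>w\<in>A. Y w \<partial>P) = (\<integral>w\<in>A. (\<integral>w. Y w \<partial>P) \<partial>P)"
      by (auto simp: set_lebesgue_integral_def prob_space intro!: Bochner_Integration.integral_cong)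
  qed (use Y in auto)
qed

lemma real_cond_exp_add_borel_measurable:
  assumes "prob_space M" "sigma_finite_subalgebra M F"
    and a: "integrable M a" and b[measurable]: "b \<in> borel_measurable F"
  shows "AE x in M. real_cond_exp M F (\<lambda>x. a x + b x) x = real_cond_exp M F a x + b x"
proof -
  interpret prob_space M by fact
  interpret sigma_finite_subalgebra M F by fact
  have bM[measurable]: "b \<in> borel_measurable M" by (rule measurable_from_subalg[OF subalg b])
  have spaceF: "space F = space M" using subalg by (simp add: subalgebra_def)
  have "AE x in M. \<bar>b x\<bar> \<le> real n \<longrightarrow>
          real_cond_exp M F (\<lambda>x. a x + b x) x = real_cond_exp M F a x + b x" for n :: nat
  proof -
    \<comment> \<open>b need not be integrable: truncate it to the F-measurable set where it is bounded by n\<close>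
    define A where "A = {x\<in>space M. \<bar>b x\<bar> \<le> real n}"
    have AF[measurable]: "A \<in> sets F"
      unfolding A_def spaceF[symmetric] by measurable
    have AM: "A \<in> sets M" using AF subalg by (auto simp: subalgebra_def)
    have iA: "integrable M (\<lambda>x. indicator A x * a x)"
      using integrable_mult_indicator[OF AM a] by simp
    have iB: "integrable M (\<lambda>x. indicator A x * b x)"
      by (rule integrable_const_bound[where B="real n"]) (auto simp: A_def indicator_def)
    have iAB: "integrable M (\<lambda>x. indicator A x * a x + indicator A x * b x)"
      using iA iB by simp
    have "AE x in M. real_cond_exp M F (\<lambda>x. indicator A x * (a x + b x)) x
        = indicator A x * real_cond_exp M F (\<lambda>x. a x + b x) x"
      by (rule real_cond_exp_mult) (use iAB a in \<open>auto simp: distrib_left\<close>)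
    moreover have "AE x in M. real_cond_exp M F (\<lambda>x. indicator A x * a x + indicator A x * b x) x
        = real_cond_exp M F (\<lambda>x. indicator A x * a x) x + real_cond_exp M F (\<lambda>x. indicator A x * b x) x"
      by (rule real_cond_exp_add[OF iA iB])
    moreover have "AE x in M. real_cond_exp M F (\<lambda>x. indicator A x * a x) x = indicator A x * real_cond_exp M F a x"
      by (rule real_cond_exp_mult) (use iA a in auto)
    moreover have "AE x in M. real_cond_exp M F (\<lambda>x. indicator A x * b x) x = indicator A x * b x"
      by (rule real_cond_exp_F_meas[OF iB]) simp
    ultimately show ?thesis
      using AE_space by eventually_elim (auto simp: A_def distrib_left)
  qed
  then have "AE x in M. \<forall>n::nat. \<bar>b x\<bar> \<le> real n \<longrightarrow>
          real_cond_exp M F (\<lambda>x. a x + b x) x = real_cond_exp M F a x + b x"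
    by (subst AE_all_countable) simp
  then show ?thesis
    by eventually_elim (meson real_arch_simple)
qed

lemma AE_atom:
  assumes "AE x in M. P x" "{x0} \<in> sets M" "emeasure M {x0} \<noteq> 0"
  shows "P x0"
proof (rule ccontr)
  assume "\<not> P x0"
  from assms(1) obtain N where N: "{x \<in> space M. \<not> P x} \<subseteq> N" "emeasure M N = 0" "N \<in> sets M"
    by (rule AE_E)
  have "x0 \<in> space M" using sets.sets_into_space[OF assms(2)] by simp
  then have "emeasure M {x0} \<le> emeasure M N"
    using N \<open>\<not> P x0\<close> by (intro emeasure_mono) auto
  then show False using N(2) assms(3) by simp
qed

lemma (in pair_sigma_finite) AE_pair_atom:
  assumes "{x\<in>space (M1 \<Otimes>\<^sub>M M2). P (fst x) (snd x)} \<in> sets (M1 \<Otimes>\<^sub>M M2)"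
    and "AE x in M1 \<Otimes>\<^sub>M M2. P (fst x) (snd x)"
    and "{y0} \<in> sets M2" "emeasure M2 {y0} \<noteq> 0"
  shows "AE x in M1. P x y0"
proof -
  have "AE y in M2. AE x in M1. P x y"
    using assms(1,2) by (simp add: AE_pair_iff AE_commute[symmetric])
  then show ?thesis using assms(3,4) by (rule AE_atom)
qed

lemma not_mutually_singular_common_point:
  assumes "sets \<mu> = sets \<nu>" "\<not> mutually_singular \<mu> \<nu>"
    and [measurable]: "Measurable.pred \<mu> P" "Measurable.pred \<mu> Q"
    and "AE x in \<mu>. P x" "AE x in \<nu>. Q x"
  obtains x where "P x" "Q x"
proof -
  let ?E = "{x \<in> space \<mu>. P x}"
  have E: "?E \<in> sets \<mu>" by measurable
  have "emeasure \<mu> (space \<mu> - ?E) = 0"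
    using assms(5) by (subst AE_iff_measurable[symmetric]) auto
  then have "emeasure \<nu> ?E \<noteq> 0"
    using assms(2) E unfolding mutually_singular_def by blast
  moreover have "{x \<in> space \<nu>. \<not> Q x} \<in> null_sets \<nu>"
    using assms(6) \<open>sets \<mu> = sets \<nu>\<close> sets_eq_imp_space_eq[OF assms(1)]
    by (subst AE_iff_null[symmetric]) (auto simp: measurable_cong_sets[OF assms(1) refl, symmetric])
  ultimately have "\<not> ?E \<subseteq> {x \<in> space \<nu>. \<not> Q x}"
    using E assms(1) by (metis emeasure_eq_0 null_setsD1 null_setsD2 sets_eq_imp_space_eq)
  then show ?thesis using that sets_eq_imp_space_eq[OF assms(1)] by auto
qed

section \<open>Supports of Borel measures\<close>

lemma null_sets_compl_measure_support:
  fixes \<mu> :: "'a::second_countable_topology measure"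
  assumes "sets \<mu> = sets borel"
  shows "- measure_support \<mu> \<in> null_sets \<mu>"
proof -
  define \<F> where "\<F> = {A. open A \<and> emeasure \<mu> A = 0}"
  have compl: "- measure_support \<mu> = \<Union>\<F>"
    by (auto simp: \<F>_def measure_support_def)
  obtain \<F>' where \<F>': "\<F>' \<subseteq> \<F>" "countable \<F>'" "\<Union>\<F>' = \<Union>\<F>"
    using Lindelof[of \<F>] by (auto simp: \<F>_def)
  have "(\<Union>A\<in>\<F>'. A) \<in> null_sets \<mu>"
    by (rule null_sets_UN'[OF \<F>'(2)]) (use \<F>'(1) assms in \<open>auto simp: \<F>_def null_sets_def\<close>)
  then show ?thesis unfolding compl \<F>'(3)[symmetric] by simp
qed

lemma AE_interior_measure_support:
  fixes \<mu> :: "'a::second_countable_topology measure"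
  assumes "sets \<mu> = sets borel" "emeasure \<mu> (frontier (measure_support \<mu>)) = 0"
  shows "AE x in \<mu>. x \<in> interior (measure_support \<mu>)"
proof (rule AE_I')
  let ?S = "measure_support \<mu>"
  have "frontier ?S \<in> null_sets \<mu>"
    using assms by (simp add: null_sets_def)
  with null_sets_compl_measure_support[OF assms(1)]
  show "- ?S \<union> frontier ?S \<in> null_sets \<mu>" by (rule null_sets.Un)
  show "{x \<in> space \<mu>. x \<notin> interior ?S} \<subseteq> - ?S \<union> frontier ?S"
    using closure_subset[of ?S] by (auto simp: frontier_def)
qed

lemma continuous_AE_eq_on_measure_support:
  fixes \<phi> \<phi>' :: "'a::topological_space \<Rightarrow> 'b::t2_space"
  assumes "sets \<mu> = sets borel" "continuous_on UNIV \<phi>" "continuous_on UNIV \<phi>'"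
    and "AE x in \<mu>. \<phi> x = \<phi>' x" "x \<in> measure_support \<mu>"
  shows "\<phi> x = \<phi>' x"
proof (rule ccontr)
  let ?U = "{x. \<phi> x \<noteq> \<phi>' x}"
  assume "\<phi> x \<noteq> \<phi>' x"
  have "open ?U" using assms(2,3) by (rule open_Collect_neq)
  then have "emeasure \<mu> ?U > 0"
    using assms(5) \<open>\<phi> x \<noteq> \<phi>' x\<close> unfolding measure_support_def by blast
  moreover have "?U \<in> sets \<mu>" using \<open>open ?U\<close> assms(1) by simp
  then have "emeasure \<mu> ?U = 0"
    using AE_iff_measurable[of ?U \<mu> "\<lambda>x. \<phi> x = \<phi>' x"] assms(4)
    by (simp add: sets_eq_imp_space_eq[OF assms(1)])
  ultimately show False by simp
qed

section \<open>Translation invariance and factorization through R\<close>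

lemma convex_local_translation_invariance:
  fixes h :: "'a::real_normed_vector \<Rightarrow> 'c" and A :: "'b::real_normed_vector \<Rightarrow> 'a"
  assumes "convex S" "linear A"
    and loc: "\<And>x. x \<in> S \<Longrightarrow> \<exists>e>0. \<forall>w. norm w < e \<longrightarrow> h (x + A w) = h x"
    and "x \<in> S" "x + A d \<in> S"
  shows "h (x + A d) = h x"
proof -
  define f where "f t = h (x + A (t *\<^sub>R d))" for t
  have "f 0 = f 1"
  proof (rule connected_local_const[of "{0..1}"])
    show "\<forall>t\<in>{0..1}. eventually (\<lambda>s. f t = f s) (at t within {0..1})"
    proof
      fix t :: real assume t: "t \<in> {0..1}"
      have "(1 - t) *\<^sub>R x + t *\<^sub>R (x + A d) \<in> S"
        using t assms(1,4,5) by (intro convexD) auto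
      then have "x + A (t *\<^sub>R d) \<in> S"
        using linear_scale[OF assms(2)] by (simp add: algebra_simps)
      then obtain e where "e > 0" and e: "\<And>w. norm w < e \<Longrightarrow> h (x + A (t *\<^sub>R d) + A w) = f t"
        using loc unfolding f_def by blast
      have "f s = f t" if "dist s t < e / (norm d + 1)" for s
      proof -
        have "norm ((s - t) *\<^sub>R d) \<le> \<bar>s - t\<bar> * (norm d + 1)"
          by (simp add: mult_left_mono)
        also have "\<dots> < e"
          using that by (simp add: dist_real_def pos_less_divide_eq add_nonneg_pos)
        finally have "h (x + A (t *\<^sub>R d) + A ((s - t) *\<^sub>R d)) = f t" by (rule e)
        then show ?thesis
          unfolding f_def by (simp add: add.assoc linear_add[OF assms(2), symmetric] algebra_simps)
      qed
      moreover have "e / (norm d + 1) > 0"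
        using \<open>e > 0\<close> by (simp add: add_nonneg_pos)
      ultimately show "eventually (\<lambda>s. f t = f s) (at t within {0..1})"
        unfolding eventually_at by (metis dist_commute)
    qed
  qed auto
  then show ?thesis
    by (simp add: f_def linear_0[OF assms(2)])
qed

lemma surjective_linear_factorization:
  fixes L :: "'a::real_normed_vector \<Rightarrow> 'b::euclidean_space" and h :: "'a \<Rightarrow> real"
  assumes "linear L" "surj L" "open S" "continuous_on S h"
    and fibre: "\<And>x x'. x \<in> S \<Longrightarrow> x' \<in> S \<Longrightarrow> L x = L x' \<Longrightarrow> h x = h x'"
  obtains \<psi> where "\<psi> \<in> borel_measurable borel" "\<And>x. x \<in> S \<Longrightarrow> h x = \<psi> (L x)"
proof -
  define \<psi>\<^sub>0 where "\<psi>\<^sub>0 y = h (SOME x. x \<in> S \<and> L x = y)" for y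
  have \<psi>\<^sub>0: "\<psi>\<^sub>0 (L x) = h x" if "x \<in> S" for x
  proof -
    define x' where "x' = (SOME x'. x' \<in> S \<and> L x' = L x)"
    have "x' \<in> S \<and> L x' = L x"
      unfolding x'_def by (rule someI[of _ x]) (simp add: that)
    then show ?thesis
      unfolding \<psi>\<^sub>0_def x'_def[symmetric] using fibre[of x' x] that by simp
  qed
  have "open (L ` S)"
    using assms(1-3) by (intro open_surjective_linear_image)
  moreover have "continuous_on (L ` S) \<psi>\<^sub>0"
    unfolding continuous_on_open_vimage[OF \<open>open (L ` S)\<close>]
  proof (intro allI impI)
    fix B :: "real set" assume "open B"
    have "\<psi>\<^sub>0 -` B \<inter> L ` S = L ` (h -` B \<inter> S)"
      using \<psi>\<^sub>0 by (auto simp: image_iff)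
    moreover have "open (h -` B \<inter> S)"
      using assms(4) \<open>open B\<close> continuous_on_open_vimage[OF assms(3)] by blast
    ultimately show "open (\<psi>\<^sub>0 -` B \<inter> L ` S)"
      using assms(1,2) by (simp add: open_surjective_linear_image)
  qed
  ultimately have "(\<lambda>y. if y \<in> L ` S then \<psi>\<^sub>0 y else 0) \<in> borel_measurable borel"
    by (intro borel_measurable_continuous_on_if continuous_on_const) simp_all
  moreover have "h x = (if L x \<in> L ` S then \<psi>\<^sub>0 (L x) else 0)" if "x \<in> S" for x
    using that \<psi>\<^sub>0 by simp
  ultimately show ?thesis by (rule that)
qed

lemma range_matrix_vector_mult_full_rank:
  fixes M :: "real^'r::finite^'p::finite"
  assumes "\<not> rank M < CARD('p)"
  shows "range (\<lambda>z. M *v z) = UNIV"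
proof -
  have "rank M \<le> CARD('p)" unfolding rank_dim_range by (rule dim_subset_UNIV_cart)
  with assms have "dim (range (\<lambda>z. M *v z)) = DIM(real^'p)" unfolding rank_dim_range by simp
  moreover have "subspace (range (\<lambda>z. M *v z))"
    by (rule linear_subspace_image[OF matrix_vector_mul_linear subspace_UNIV])
  ultimately show ?thesis by (metis dim_eq_full span_eq_iff)
qed

lemma in_range_if_transpose_kernel_span_columns:
  fixes M :: "real^'r::finite^'p::finite" and R :: "real^'k::finite^'p"
  assumes span_R: "span (columns R) = {v. transpose M *v v = 0}" and d: "transpose R *v d = 0"
  shows "d \<in> range (\<lambda>z. M *v z)"
proof -
  \<comment> \<open>split off the component z of d orthogonal to the range of M; it lies in the kernel of M^T,
    which is spanned by the columns of R, all of which are orthogonal to d\<close>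
  obtain y z where y: "y \<in> span (range (\<lambda>w. M *v w))"
    and z: "\<And>u. u \<in> span (range (\<lambda>w. M *v w)) \<Longrightarrow> orthogonal z u" and dyz: "d = y + z"
    using orthogonal_subspace_decomp_exists[of "range (\<lambda>w. M *v w)" d] by blast
  have "(z v* M) \<bullet> (z v* M) = z \<bullet> (M *v (z v* M))"
    by (rule dot_lmul_matrix)
  also have "\<dots> = 0"
    using z[of "M *v (z v* M)"] by (simp add: span_base orthogonal_def)
  finally have "z \<in> span (columns R)" using span_R by simp
  moreover have "d \<bullet> u = 0" if u: "u \<in> columns R" for u
  proof -
    obtain i where "u = R *v axis i 1"
      using u by (auto simp: columns_image_basis)
    then show ?thesis using dot_lmul_matrix[of d R "axis i 1"] d by simp
  qed
  ultimately have "d \<bullet> z = 0"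
    using linear_eq_0_on_span[of "\<lambda>u. d \<bullet> u" "columns R" z]
    by (auto intro: bounded_linear.linear[OF bounded_linear_inner_right])
  moreover have "z \<bullet> y = 0" using z[OF y] by (simp add: orthogonal_def)
  ultimately have "z \<bullet> z = 0" by (simp add: dyz inner_add_right inner_commute)
  then have "d = y" using dyz by simp
  moreover have "subspace (range (\<lambda>w. M *v w))"
    by (rule linear_subspace_image[OF matrix_vector_mul_linear subspace_UNIV])
  ultimately show ?thesis using y by (simp add: span_eq_iff[THEN iffD2])
qed

lemma valid_R_kernel_subset_range:
  fixes M :: "real^'r::finite^'p::finite" and R :: "real^'k::finite^'p"
  assumes "valid_R M R" "transpose R *v d = 0"
  shows "d \<in> range (\<lambda>z. M *v z)"
  using assms in_range_if_transpose_kernel_span_columns range_matrix_vector_mult_full_rank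
  unfolding valid_R_def by (metis UNIV_I)

lemma valid_R_transpose_projection:
  fixes M :: "real^'r::finite^'p::finite" and R :: "real^'k::finite^'p"
  assumes "valid_R M R"
  shows "transpose R *v (R *v (transpose R *v x)) = transpose R *v x"
proof (cases "rank M < CARD('p)")
  case True
  then have "transpose R ** R = mat 1" using assms by (simp add: valid_R_def)
  then show ?thesis by (metis matrix_vector_mul_assoc matrix_vector_mul_lid)
next
  case False
  then show ?thesis using assms by (simp add: valid_R_def)
qed

lemma linear_factor_valid_R:
  fixes k :: "real^'p::finite \<Rightarrow> real" and M :: "real^'r::finite^'p" and R :: "real^'k::finite^'p"
  assumes "linear k" "\<And>z. k (M *v z) = 0" "valid_R M R"
  shows "k x = k (R *v (transpose R *v x))"
proof -
  have "transpose R *v (x - R *v (transpose R *v x)) = 0"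
    using valid_R_transpose_projection[OF assms(3)] by (simp add: matrix_vector_mult_diff_distrib)
  then obtain z where "x - R *v (transpose R *v x) = M *v z"
    using valid_R_kernel_subset_range[OF assms(3)] by blast
  then show ?thesis
    using assms(2)[of z] linear_diff[OF assms(1)] by (metis eq_iff_diff_eq_0)
qed

lemma valid_R_factorization_open:
  fixes M :: "real^'r::finite^'p::finite" and R :: "real^'k::finite^'p" and h :: "real^'p \<Rightarrow> real"
  assumes R: "valid_R M R" and "open S" "continuous_on S h"
    and invariant: "\<And>x d. x \<in> S \<Longrightarrow> x + M *v d \<in> S \<Longrightarrow> h (x + M *v d) = h x"
  obtains \<psi> where "\<psi> \<in> borel_measurable borel" "\<And>x. x \<in> S \<Longrightarrow> h x = \<psi> (transpose R *v x)"
proof -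
  have fibre: "h x = h x'" if "x \<in> S" "x' \<in> S" "transpose R *v x = transpose R *v x'" for x x'
  proof -
    have "transpose R *v (x' - x) = 0"
      using that(3) by (simp add: matrix_vector_mult_diff_distrib)
    then obtain d where "x' = x + M *v d"
      using valid_R_kernel_subset_range[OF R] by (metis diff_add_cancel add.commute rangeE)
    then show ?thesis using invariant that(1,2) by simp
  qed
  show ?thesis
  proof (cases "rank M < CARD('p)")
    case True
    then have "transpose R ** R = mat 1" using R by (simp add: valid_R_def)
    then have "surj (\<lambda>x. transpose R *v x)"
      by (metis matrix_vector_mul_assoc matrix_vector_mul_lid surjI)
    from surjective_linear_factorization[OF matrix_vector_mul_linear this assms(2,3) fibre]
    show ?thesis using that by blast
  next
    case False
    then have "R = 0" using R by (simp add: valid_R_def)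
    have "h x = h (SOME x. x \<in> S)" if "x \<in> S" for x
      using fibre[OF that someI[of "\<lambda>x. x \<in> S", OF that]] by (simp add: \<open>R = 0\<close>)
    then show ?thesis by (intro that[of "\<lambda>_. h (SOME x. x \<in> S)"]) auto
  qed
qed

lemma invariant_on_open_convex_image:
  fixes M :: "real^'r::finite^'p::finite" and h k :: "real^'p \<Rightarrow> 'c"
  assumes "open D" "convex D" and eq: "\<And>v z. (v, z) \<in> D \<Longrightarrow> h (M *v z + v) = k v"
    and "x \<in> (\<lambda>(v, z). M *v z + v) ` D" "x + M *v d \<in> (\<lambda>(v, z). M *v z + v) ` D"
  shows "h (x + M *v d) = h x"
proof (rule convex_local_translation_invariance[where A="\<lambda>w. M *v w"])
  have "linear (\<lambda>(v, z). M *v z + v)"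
    by (auto intro!: linearI simp: matrix_vector_right_distrib matrix_vector_mult_scaleR algebra_simps)
  from convex_linear_image[OF this \<open>convex D\<close>]
  show "convex ((\<lambda>(v, z). M *v z + v) ` D)" .
  fix y assume "y \<in> (\<lambda>(v, z). M *v z + v) ` D"
  then obtain v z where vz: "(v, z) \<in> D" and y: "y = M *v z + v" by auto
  obtain e where "e > 0" and e: "ball (v, z) e \<subseteq> D"
    using \<open>open D\<close> vz open_contains_ball by blast
  have "h (y + M *v w) = h y" if "norm w < e" for w
  proof -
    have "(v, z + w) \<in> D"
      using e that by (auto simp: dist_Pair_Pair dist_norm)
    then have "h (M *v (z + w) + v) = h y"
      using eq vz y by simp
    then show ?thesis by (simp add: y matrix_vector_right_distrib algebra_simps)
  qed
  with \<open>e > 0\<close> show "\<exists>e>0. \<forall>w. norm w < e \<longrightarrow> h (y + M *v w) = h y" by blast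
qed (use assms in \<open>auto intro: matrix_vector_mul_linear\<close>)

section \<open>The model under the training distribution\<close>

(* The SIMDG with Lambda0 = L and M0 = M under the training law Q = Q_tr of Z;
   P is P_tr and VZ the law of (V, Z) under P_tr. *)
locale simdg_training =
  fixes f0 :: "real^'p::finite \<Rightarrow> real" and M :: "real^'r::finite^'p"
    and L :: "(real \<times> (real^'p)) measure" and Q :: "(real^'r) measure"
    and g0 :: "real^'p \<Rightarrow> real"
  assumes f0_measurable [measurable]: "f0 \<in> borel_measurable borel"
    and prob_space_L: "prob_space L" and sets_L [measurable_cong]: "sets L = sets borel"
    and integrable_U: "integrable L fst"
    and prob_space_Q: "prob_space Q" and sets_Q [measurable_cong]: "sets Q = sets borel"
    and square_integrable_f0_X: "integrable (induced_dist f0 M L Q) (\<lambda>w. (f0 (obsX w))\<^sup>2)"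
    and gamma0: "is_gamma0 (induced_dist f0 M L Q) g0"
begin

abbreviation "P \<equiv> induced_dist f0 M L Q"

abbreviation "VZ \<equiv> distr P borel (\<lambda>w. (obsV w, obsZ w))"

definition observe :: "(real \<times> (real^'p)) \<times> (real^'r) \<Rightarrow> ('p, 'r) obs" where
  "observe x = (fst (fst x), snd (fst x), M *v snd x + snd (fst x),
     f0 (M *v snd x + snd (fst x)) + fst (fst x), snd x)"

sublocale L: prob_space L by (rule prob_space_L)
sublocale Q: prob_space Q by (rule prob_space_Q)
sublocale LQ: pair_prob_space L Q ..

lemma sets_LQ [measurable_cong]: "sets (L \<Otimes>\<^sub>M Q) = sets borel"
  using sets_pair_measure_cong[OF sets_L sets_Q] borel_prod by metis

lemma space_LQ [simp]: "space (L \<Otimes>\<^sub>M Q) = UNIV"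
  using sets_eq_imp_space_eq[OF sets_LQ] by simp

lemma observe_measurable [measurable]: "observe \<in> L \<Otimes>\<^sub>M Q \<rightarrow>\<^sub>M borel"
  unfolding observe_def by measurable

lemma obs_observe [simp]:
  "obsU (observe x) = fst (fst x)" "obsV (observe x) = snd (fst x)"
  "obsX (observe x) = M *v snd x + snd (fst x)"
  "obsY (observe x) = f0 (M *v snd x + snd (fst x)) + fst (fst x)" "obsZ (observe x) = snd x"
  by (simp_all add: observe_def obsU_def obsV_def obsX_def obsY_def obsZ_def)

lemma P_eq_distr_observe: "P = distr (L \<Otimes>\<^sub>M Q) borel observe"
  unfolding induced_dist_def observe_def
  by (intro arg_cong[where f="distr (L \<Otimes>\<^sub>M Q) borel"]) (auto simp: fun_eq_iff)

lemma sets_P [measurable_cong]: "sets P = sets borel"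
  by (simp add: P_eq_distr_observe)

lemma space_P [simp]: "space P = UNIV"
  by (simp add: P_eq_distr_observe)

sublocale P: prob_space P
  unfolding P_eq_distr_observe by (intro prob_space.prob_space_distr LQ.prob_space_axioms observe_measurable)

lemma AE_P_iff:
  "Measurable.pred borel \<Phi> \<Longrightarrow> (AE w in P. \<Phi> w) \<longleftrightarrow> (AE x in L \<Otimes>\<^sub>M Q. \<Phi> (observe x))"
  unfolding P_eq_distr_observe by (rule AE_distr_iff) auto

lemma integral_P:
  "G \<in> borel_measurable borel \<Longrightarrow> integral\<^sup>L P G = (\<integral>x. G (observe x) \<partial>(L \<Otimes>\<^sub>M Q))"
  for G :: "_ \<Rightarrow> real"
  unfolding P_eq_distr_observe by (rule integral_distr) auto

lemma integrable_P:
  "G \<in> borel_measurable borel \<Longrightarrow> integrable P G \<longleftrightarrow> integrable (L \<Otimes>\<^sub>M Q) (\<lambda>x. G (observe x))"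
  for G :: "_ \<Rightarrow> real"
  unfolding P_eq_distr_observe by (rule integrable_distr_eq) auto

lemma integral_LQ_fst:
  "G \<in> borel_measurable borel \<Longrightarrow> (\<integral>x. G (fst x) \<partial>(L \<Otimes>\<^sub>M Q)) = integral\<^sup>L L G"
  for G :: "_ \<Rightarrow> real"
  using integral_distr[of fst "L \<Otimes>\<^sub>M Q" L G] by (simp add: Q.distr_pair_fst[of L])

lemma integrable_LQ_fst:
  "G \<in> borel_measurable borel \<Longrightarrow> integrable (L \<Otimes>\<^sub>M Q) (\<lambda>x. G (fst x)) \<longleftrightarrow> integrable L G"
  for G :: "_ \<Rightarrow> real"
  using integrable_distr_eq[of fst "L \<Otimes>\<^sub>M Q" L G] by (simp add: Q.distr_pair_fst[of L])

lemma AE_obsX: "AE w in P. obsX w = M *v obsZ w + obsV w"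
  by (subst AE_P_iff) auto

lemma AE_obsY: "AE w in P. obsY w = f0 (obsX w) + obsU w"
  by (subst AE_P_iff) auto

lemma g0_measurable [measurable]: "g0 \<in> borel_measurable borel"
  using gamma0 by (simp add: is_gamma0_def)

lemma integrable_f0_X: "integrable P (\<lambda>w. f0 (obsX w))"
  by (rule P.square_integrable_imp_integrable[OF _ square_integrable_f0_X]) simp

lemma integrable_obsU: "integrable P obsU"
  using integrable_U by (simp add: integrable_P integrable_LQ_fst[where G=fst, simplified])

lemma integrable_obsY: "integrable P obsY"
  by (rule integrable_cong_AE_imp[OF Bochner_Integration.integrable_add[OF integrable_f0_X integrable_obsU]])
    (use AE_obsY in auto)

lemma sigma_finite_subalgebra_P:
  "W \<in> borel \<rightarrow>\<^sub>M borel \<Longrightarrow> sigma_finite_subalgebra P (vimage_algebra UNIV W (borel::'b::topological_space measure))"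
  using sigma_finite_subalgebra_vimage_algebra[OF P.prob_space_axioms, of W] by simp

lemma AE_gamma0: "AE w in P. g0 (obsV w) = real_cond_exp P (vimage_algebra UNIV obsV borel) obsU w"
  using gamma0 by (simp add: is_gamma0_def cond_exp_given_def)

lemma integrable_g0_V: "integrable P (\<lambda>w. g0 (obsV w))"
proof -
  interpret sigma_finite_subalgebra P "vimage_algebra UNIV obsV borel"
    by (rule sigma_finite_subalgebra_P) measurable
  show ?thesis
    using AE_gamma0 real_cond_exp_int(1)[OF integrable_obsU] by (subst integrable_cong_AE) auto
qed

lemma gamma0_set_integral:
  assumes [measurable]: "C \<in> sets borel"
  shows "(\<integral>x. indicator C (snd x) * fst x \<partial>L) = (\<integral>x. indicator C (snd x) * g0 (snd x) \<partial>L)"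
proof -
  interpret sigma_finite_subalgebra P "vimage_algebra UNIV obsV borel"
    by (rule sigma_finite_subalgebra_P) measurable
  have "obsV -` C \<in> sets (vimage_algebra UNIV obsV borel)"
    using in_vimage_algebra[of C borel obsV UNIV] by simp
  from real_cond_exp_intA[OF integrable_obsU this]
  have "(\<integral>w. indicator C (obsV w) * obsU w \<partial>P)
      = (\<integral>w. indicator C (obsV w) * real_cond_exp P (vimage_algebra UNIV obsV borel) obsU w \<partial>P)"
    unfolding set_lebesgue_integral_def indicator_vimage by simp
  also have "\<dots> = (\<integral>w. indicator C (obsV w) * g0 (obsV w) \<partial>P)"
    by (rule integral_cong_AE) (use AE_gamma0 in auto)
  finally show ?thesis
    by (simp add: integral_P integral_LQ_fst[where G="\<lambda>x. indicator C (snd x) * fst x", simplified]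
        integral_LQ_fst[where G="\<lambda>x. indicator C (snd x) * g0 (snd x)", simplified])
qed

lemma gamma0_set_integral_pair:
  assumes [measurable]: "D \<in> sets borel"
  shows "(\<integral>x. indicator D (snd (fst x), snd x) * fst (fst x) \<partial>(L \<Otimes>\<^sub>M Q))
    = (\<integral>x. indicator D (snd (fst x), snd x) * g0 (snd (fst x)) \<partial>(L \<Otimes>\<^sub>M Q))"
proof -
  have integrable_g0: "integrable L (\<lambda>x. g0 (snd x))"
    using integrable_g0_V
    by (simp add: integrable_P integrable_LQ_fst[where G="\<lambda>x. g0 (snd x)", simplified])
  have integrable_indicator: "integrable (L \<Otimes>\<^sub>M Q) (\<lambda>x. indicator D (snd (fst x), snd x) * G (fst x))"
    if "integrable L G" "G \<in> borel_measurable borel" for G :: "_ \<Rightarrow> real"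
  proof -
    have "{x. (snd (fst x), snd x) \<in> D} \<in> sets (L \<Otimes>\<^sub>M Q)" by measurable
    moreover have "integrable (L \<Otimes>\<^sub>M Q) (\<lambda>x. G (fst x))"
      using that by (simp add: integrable_LQ_fst)
    ultimately have "integrable (L \<Otimes>\<^sub>M Q)
        (\<lambda>x. indicator {x. (snd (fst x), snd x) \<in> D} x *\<^sub>R G (fst x))"
      by (rule integrable_mult_indicator)
    then show ?thesis by (simp add: indicator_def)
  qed
  have "(\<integral>x. indicator D (snd (fst x), snd x) * fst (fst x) \<partial>(L \<Otimes>\<^sub>M Q))
      = (\<integral>z. (\<integral>x. indicator D (snd x, z) * fst x \<partial>L) \<partial>Q)"
    using LQ.integral_snd[of "\<lambda>x z. indicator D (snd x, z) * fst x"] integrable_indicator[OF integrable_U]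
    by (simp add: split_beta')
  also have "\<dots> = (\<integral>z. (\<integral>x. indicator D (snd x, z) * g0 (snd x) \<partial>L) \<partial>Q)"
  proof (rule Bochner_Integration.integral_cong[OF refl])
    fix z :: "real^'r"
    have "(\<lambda>v::real^'p. (v, z)) \<in> borel \<rightarrow>\<^sub>M borel" by measurable
    from measurable_sets[OF this assms] have "(\<lambda>v. (v, z)) -` D \<in> sets borel" by simp
    from gamma0_set_integral[OF this]
    show "(\<integral>x. indicator D (snd x, z) * fst x \<partial>L) = (\<integral>x. indicator D (snd x, z) * g0 (snd x) \<partial>L)"
      by (simp add: indicator_def)
  qed
  also have "\<dots> = (\<integral>x. indicator D (snd (fst x), snd x) * g0 (snd (fst x)) \<partial>(L \<Otimes>\<^sub>M Q))"
    using LQ.integral_snd[of "\<lambda>x z. indicator D (snd x, z) * g0 (snd x)"] integrable_indicator[OF integrable_g0]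
    by (simp add: split_beta')
  finally show ?thesis .
qed

lemma cond_exp_obsY_given_XV:
  "AE w in P. cond_exp_given P (\<lambda>w. (obsX w, obsV w)) obsY w = f0 (obsX w) + g0 (obsV w)"
proof -
  let ?F = "vimage_algebra UNIV (\<lambda>w. (obsX w, obsV w)) (borel :: ((real^'p) \<times> (real^'p)) measure)"
  interpret sigma_finite_subalgebra P ?F
    by (rule sigma_finite_subalgebra_P) measurable
  have "AE w in P. real_cond_exp P ?F obsY w = f0 (obsX w) + g0 (obsV w)"
  proof (rule real_cond_exp_charact)
    have XV: "(\<lambda>w. (obsX w, obsV w)) \<in> ?F \<rightarrow>\<^sub>M borel"
      by (rule measurable_vimage_algebra1) simp
    have "(\<lambda>p::(real^'p) \<times> (real^'p). f0 (fst p) + g0 (snd p)) \<in> borel_measurable borel"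
      by measurable
    from measurable_compose[OF XV this]
    show "(\<lambda>w. f0 (obsX w) + g0 (obsV w)) \<in> borel_measurable ?F" by simp
    fix A :: "('p, 'r) obs set" assume "A \<in> sets ?F"
    then obtain B where [measurable]: "B \<in> sets borel" and A: "A = (\<lambda>w. (obsX w, obsV w)) -` B"
      by (auto simp: sets_vimage_algebra2)
    let ?I = "\<lambda>w. indicator B (obsX w, obsV w) :: real"
    have integrable_I: "integrable P (\<lambda>w. ?I w * G w)" if "integrable P G" for G :: "_ \<Rightarrow> real"
    proof -
      have "{w. (obsX w, obsV w) \<in> B} \<in> sets P" by measurable
      from integrable_mult_indicator[OF this that]
      show ?thesis by (simp add: indicator_def)
    qed
    define D where "D = {p :: (real^'p) \<times> (real^'r). (M *v snd p + fst p, fst p) \<in> B}"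
    have [measurable]: "D \<in> sets borel" unfolding D_def by measurable
    have "(\<integral>w. ?I w * obsU w \<partial>P) = (\<integral>w. ?I w * g0 (obsV w) \<partial>P)"
      using gamma0_set_integral_pair[of D] by (simp add: integral_P D_def indicator_def)
    then have "(\<integral>w. ?I w * (f0 (obsX w) + obsU w) \<partial>P) = (\<integral>w. ?I w * (f0 (obsX w) + g0 (obsV w)) \<partial>P)"
      using integrable_I[OF integrable_f0_X] integrable_I[OF integrable_obsU] integrable_I[OF integrable_g0_V]
      by (simp add: distrib_left)
    moreover have "(\<integral>w. ?I w * obsY w \<partial>P) = (\<integral>w. ?I w * (f0 (obsX w) + obsU w) \<partial>P)"
      by (rule integral_cong_AE) (use AE_obsY in auto)
    ultimately show "(\<integral>w\<in>A. obsY w \<partial>P) = (\<integral>w\<in>A. (f0 (obsX w) + g0 (obsV w)) \<partial>P)"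
      unfolding set_lebesgue_integral_def A indicator_vimage by simp
  qed (use integrable_obsY integrable_f0_X integrable_g0_V in auto)
  then show ?thesis by (simp add: cond_exp_given_def)
qed

lemma AE_VZ_iff:
  "Measurable.pred borel \<Phi> \<Longrightarrow> (AE p in VZ. \<Phi> p) \<longleftrightarrow> (AE w in P. \<Phi> (obsV w, obsZ w))"
  by (rule AE_distr_iff) auto

lemma AE_VZ_difference:
  assumes [measurable]: "f \<in> borel_measurable borel" "g \<in> borel_measurable borel"
    and eq: "AE w in P. f0 (obsX w) + g0 (obsV w) = f (obsX w) + g (obsV w)"
  shows "AE p in VZ. f0 (M *v snd p + fst p) - f (M *v snd p + fst p) = g (fst p) - g0 (fst p)"
proof (subst AE_VZ_iff)
  show "AE w in P. f0 (M *v snd (obsV w, obsZ w) + fst (obsV w, obsZ w))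
      - f (M *v snd (obsV w, obsZ w) + fst (obsV w, obsZ w))
      = g (fst (obsV w, obsZ w)) - g0 (fst (obsV w, obsZ w))"
    using eq AE_obsX by eventually_elim simp
qed measurable

lemma distr_P_observe:
  "F \<in> borel \<rightarrow>\<^sub>M N \<Longrightarrow> distr P N F = distr (L \<Otimes>\<^sub>M Q) N (\<lambda>x. F (observe x))"
  unfolding P_eq_distr_observe by (subst distr_distr) (auto simp: comp_def)

lemma distr_obsV: "distr P borel obsV = distr L borel snd"
proof -
  have "distr P borel obsV = distr (distr (L \<Otimes>\<^sub>M Q) L fst) borel snd"
    by (simp add: distr_P_observe distr_distr comp_def)
  then show ?thesis by (simp add: Q.distr_pair_fst[of L])
qed

lemma distr_obsZ: "distr P borel obsZ = Q"
proof -
  have "distr P borel obsZ = distr (L \<Otimes>\<^sub>M Q) Q snd"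
    by (simp add: distr_P_observe) (rule distr_cong; simp add: sets_Q)
  also have "\<dots> = distr (Q \<Otimes>\<^sub>M L) Q fst"
    by (subst LQ.distr_pair_swap) (simp add: distr_distr comp_def split_beta')
  finally show ?thesis by (simp add: L.distr_pair_fst[of Q])
qed

lemma distr_obsV_obsZ: "VZ = distr P borel obsV \<Otimes>\<^sub>M Q"
proof -
  have "distr L borel snd \<Otimes>\<^sub>M distr Q borel (\<lambda>z. z)
      = distr (L \<Otimes>\<^sub>M Q) (borel \<Otimes>\<^sub>M borel) (\<lambda>(x, z). (snd x, z))"
    by (rule pair_measure_distr) (auto simp: distr_id2 sets_Q Q.sigma_finite_measure_axioms)
  then show ?thesis
    by (simp add: distr_obsV distr_id2[OF sets_Q[symmetric]] distr_P_observe split_beta' borel_prod)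
qed

lemma AE_shifted_obsV_atom:
  assumes [measurable]: "Measurable.pred borel (\<lambda>p. \<Phi> (fst p) (snd p))"
    and "AE p in VZ. \<Phi> (fst p) (snd p)" and "measure P {w \<in> space P. obsZ w = z} > 0"
  shows "AE y in distr P borel (\<lambda>w. obsV w + M *v z). \<Phi> (y - M *v z) z"
proof -
  interpret pair_sigma_finite "distr P borel obsV" Q
    by (intro pair_sigma_finite.intro prob_space_imp_sigma_finite P.prob_space_distr
        Q.sigma_finite_measure_axioms) simp
  have "measure (distr P borel obsZ) {z} = measure P {w \<in> space P. obsZ w = z}"
    by (simp add: measure_distr vimage_def)
  then have "emeasure Q {z} \<noteq> 0"
    using assms(3) by (simp add: distr_obsZ Q.emeasure_eq_measure)
  moreover have [measurable_cong]: "sets (distr P borel obsV \<Otimes>\<^sub>M Q) = sets borel"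
    by (metis sets_distr sets_pair_measure_cong sets_Q borel_prod)
  then have "{p \<in> space (distr P borel obsV \<Otimes>\<^sub>M Q). \<Phi> (fst p) (snd p)} \<in> sets (distr P borel obsV \<Otimes>\<^sub>M Q)"
    by measurable
  ultimately have "AE v in distr P borel obsV. \<Phi> v z"
    using assms(2) unfolding distr_obsV_obsZ by (intro AE_pair_atom) simp_all
  have shift: "distr P borel (\<lambda>w. obsV w + M *v z) = distr (distr P borel obsV) borel (\<lambda>v. v + M *v z)"
    by (subst distr_distr) (simp_all add: comp_def)
  have "(\<lambda>y::real^'p. (y - M *v z, z)) \<in> borel \<rightarrow>\<^sub>M borel"
    by measurable
  from measurable_compose[OF this assms(1)]
  have "(AE y in distr (distr P borel obsV) borel (\<lambda>v. v + M *v z). \<Phi> (y - M *v z) z)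
      \<longleftrightarrow> (AE v in distr P borel obsV. \<Phi> (v + M *v z - M *v z) z)"
    by (intro AE_distr_iff) (auto simp: pred_def)
  with \<open>AE v in distr P borel obsV. \<Phi> v z\<close> show ?thesis
    unfolding shift by simp
qed

lemma condition_A_vanishes_on_range:
  fixes h k :: "real^'p \<Rightarrow> real"
  assumes condA: "condition_A P M g0" and "linear k" and [measurable]: "h \<in> borel_measurable borel"
    and VZ: "AE p in VZ. h (M *v snd p + fst p) = k (fst p)"
  shows "k (M *v z) = 0"
proof -
  obtain ZZ zs zs' where ZZ: "\<And>z. z \<in> ZZ \<Longrightarrow> measure P {w \<in> space P. obsZ w = z} > 0"
    and pairs: "\<And>j. j \<in> {1..rank M} \<Longrightarrow> zs j \<in> ZZ \<and> zs' j \<in> ZZ \<and>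
      \<not> mutually_singular (distr P borel (\<lambda>w. obsV w + M *v zs j)) (distr P borel (\<lambda>w. obsV w + M *v zs' j))"
    and span: "span ((\<lambda>j. M *v (zs j - zs' j)) ` {1..rank M}) = range (\<lambda>z. M *v z)"
    using condA unfolding condition_A_def by blast
  have [measurable]: "k \<in> borel_measurable borel"
    using \<open>linear k\<close> by (rule borel_measurable_linear)
  have atom: "AE y in distr P borel (\<lambda>w. obsV w + M *v z). h y = k y - k (M *v z)"
    if "z \<in> ZZ" for z
    using AE_shifted_obsV_atom[OF _ VZ ZZ[OF that]] linear_diff[OF \<open>linear k\<close>] by simp
  \<comment> \<open>overlapping shifted laws of V give a common point y, at which k (M zs j) = k y - h y = k (M zs' j)\<close>
  have k_pairs: "k (M *v (zs j - zs' j)) = 0" if j: "j \<in> {1..rank M}" for j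
  proof -
    have pred: "Measurable.pred (distr P borel (\<lambda>w. obsV w + M *v z')) (\<lambda>y. h y = k y - k (M *v z))"
      for z z' by measurable
    have "sets (distr P borel (\<lambda>w. obsV w + M *v zs j)) = sets (distr P borel (\<lambda>w. obsV w + M *v zs' j))"
      by simp
    from not_mutually_singular_common_point[OF this _ pred pred atom atom]
    obtain y where "h y = k y - k (M *v zs j)" "h y = k y - k (M *v zs' j)"
      using pairs[OF j] by blast
    then show ?thesis
      by (simp add: matrix_vector_mult_diff_distrib linear_diff[OF \<open>linear k\<close>])
  qed
  show ?thesis
  proof (rule linear_eq_0_on_span[OF \<open>linear k\<close>])
    show "M *v z \<in> span ((\<lambda>j. M *v (zs j - zs' j)) ` {1..rank M})"
      using span by simp
  qed (use k_pairs in auto)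
qed

lemma factorization_condition_A:
  fixes R :: "real^'k::finite^'p" and f g :: "real^'p \<Rightarrow> real"
  assumes condA: "condition_A P M g0" and R: "valid_R M R"
    and [measurable]: "f \<in> borel_measurable borel" and "linear g"
    and eq: "AE w in P. f0 (obsX w) + g0 (obsV w) = f (obsX w) + g (obsV w)"
  shows "\<exists>\<psi>\<in>borel_measurable borel. AE w in P. f0 (obsX w) - f (obsX w) = \<psi> (transpose R *v obsX w)"
proof -
  define k where "k v = g v - g0 v" for v
  have "linear g0"
    using condA unfolding condition_A_def by blast
  with \<open>linear g\<close> have "linear k"
    unfolding k_def[abs_def] by (rule linear_compose_sub)
  then have [measurable]: "k \<in> borel_measurable borel" "g \<in> borel_measurable borel"
    using \<open>linear g\<close> by (simp_all add: borel_measurable_linear)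
  have "AE p in VZ. f0 (M *v snd p + fst p) - f (M *v snd p + fst p) = k (fst p)"
    unfolding k_def by (rule AE_VZ_difference) (use eq in simp_all)
  from condition_A_vanishes_on_range[OF condA \<open>linear k\<close> _ this]
  have kM: "k (M *v z) = 0" for z
    by simp
  have "AE w in P. f0 (obsX w) - f (obsX w) = k (R *v (transpose R *v obsX w))"
    using eq AE_obsX
  proof eventually_elim
    case (elim w)
    have "k (obsX w) = k (obsV w)"
      using elim(2) kM linear_add[OF \<open>linear k\<close>] by simp
    moreover have "f0 (obsX w) - f (obsX w) = k (obsV w)"
      using elim(1) by (simp add: k_def)
    ultimately show ?case
      using linear_factor_valid_R[OF \<open>linear k\<close> kM R, of "obsX w"] by linarith
  qed
  moreover have "(\<lambda>y. k (R *v y)) \<in> borel_measurable borel"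
    by measurable
  ultimately show ?thesis
    by (intro bexI[of _ "\<lambda>y. k (R *v y)"]) simp_all
qed

lemma eq_on_measure_support_VZ:
  fixes h k :: "real^'p \<Rightarrow> real"
  assumes "continuous_on UNIV h" "continuous_on UNIV k"
    and "AE p in VZ. h (M *v snd p + fst p) = k (fst p)" and "(v, z) \<in> measure_support VZ"
  shows "h (M *v z + v) = k v"
proof -
  have "continuous_on UNIV (\<lambda>p::(real^'p) \<times> (real^'r). M *v snd p + fst p)"
    by (intro continuous_on_add continuous_on_fst continuous_on_id linear_continuous_on
        bounded_linear_compose[OF matrix_vector_mul_bounded_linear bounded_linear_snd])
  then have "continuous_on UNIV (\<lambda>p::(real^'p) \<times> (real^'r). h (M *v snd p + fst p))"
    using continuous_on_compose2[OF assms(1)] by blast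
  moreover have "continuous_on UNIV (\<lambda>p::(real^'p) \<times> (real^'r). k (fst p))"
    using continuous_on_compose2[OF assms(2) continuous_on_fst[OF continuous_on_id]] by blast
  ultimately show ?thesis
    using continuous_AE_eq_on_measure_support[OF sets_distr _ _ assms(3) assms(4)] by simp
qed

lemma AE_obsX_in_interior_measure_support_image:
  assumes "measure P {w \<in> space P. (obsV w, obsZ w) \<in> frontier (measure_support VZ)} = 0"
  shows "AE w in P. obsX w \<in> (\<lambda>(v, z). M *v z + v) ` interior (measure_support VZ)"
proof -
  have "AE p in VZ. p \<in> interior (measure_support VZ)"
  proof (rule AE_interior_measure_support)
    show "emeasure VZ (frontier (measure_support VZ)) = 0"
      using assms by (simp add: emeasure_distr P.emeasure_eq_measure vimage_def)
  qed simp
  moreover have "Measurable.pred borel (\<lambda>p. p \<in> interior (measure_support VZ))"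
    unfolding pred_def by simp
  ultimately have "AE w in P. (obsV w, obsZ w) \<in> interior (measure_support VZ)"
    by (subst (asm) AE_VZ_iff)
  with AE_obsX show ?thesis
    by eventually_elim (auto intro!: image_eqI[where x="(obsV _, obsZ _)"])
qed

lemma factorization_condition_B:
  fixes R :: "real^'k::finite^'p" and f g :: "real^'p \<Rightarrow> real"
  assumes condB: "condition_B P f0 g0" and R: "valid_R M R"
    and "f \<in> differentiable_fns" "g \<in> differentiable_fns"
    and eq: "AE w in P. f0 (obsX w) + g0 (obsV w) = f (obsX w) + g (obsV w)"
  shows "\<exists>\<psi>\<in>borel_measurable borel. AE w in P. f0 (obsX w) - f (obsX w) = \<psi> (transpose R *v obsX w)"
proof -
  define S where "S = measure_support VZ"
  define h where "h x = f0 x - f x" for x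
  define k where "k v = g v - g0 v" for v
  define Ob where "Ob = (\<lambda>(v, z). M *v z + v) ` interior S"
  have frontier: "measure P {w \<in> space P. (obsV w, obsZ w) \<in> frontier S} = 0"
    and "convex (interior S)" and "f0 \<in> differentiable_fns" "g0 \<in> differentiable_fns"
    using condB by (simp_all add: condition_B_def Let_def S_def differentiable_fns_def)
  with assms(3,4) have continuous: "continuous_on UNIV \<phi>" if "\<phi> \<in> {f0, f, g0, g}" for \<phi>
    using that continuous_on_differentiable_fns by blast
  then have [measurable]: "\<phi> \<in> borel_measurable borel" if "\<phi> \<in> {f0, f, g0, g}" for \<phi>
    using that by (intro borel_measurable_continuous_onI)
  have "continuous_on UNIV h" "continuous_on UNIV k"
    unfolding h_def[abs_def] k_def[abs_def] by (simp_all add: continuous_on_diff continuous)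
  moreover have "AE p in VZ. h (M *v snd p + fst p) = k (fst p)"
    unfolding h_def k_def using eq by (intro AE_VZ_difference) simp_all
  ultimately have on_S: "h (M *v z + v) = k v" if "(v, z) \<in> S" for v z
    using eq_on_measure_support_VZ that unfolding S_def by blast
  obtain \<psi> where "\<psi> \<in> borel_measurable borel" "\<And>x. x \<in> Ob \<Longrightarrow> h x = \<psi> (transpose R *v x)"
  proof (rule valid_R_factorization_open[OF R])
    show "open Ob"
      unfolding Ob_def
      by (intro open_surjective_linear_image open_interior)
        (auto intro!: linearI surjI[of _ "\<lambda>x. (x, 0)"]
          simp: matrix_vector_right_distrib matrix_vector_mult_scaleR algebra_simps)
    show "continuous_on Ob h"
      using \<open>continuous_on UNIV h\<close> by (rule continuous_on_subset) simp
    show "h (x + M *v d) = h x" if "x \<in> Ob" "x + M *v d \<in> Ob" for x d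
      using invariant_on_open_convex_image[OF _ \<open>convex (interior S)\<close>] on_S that interior_subset
      unfolding Ob_def by blast
  qed blast
  moreover have "AE w in P. obsX w \<in> Ob"
    using AE_obsX_in_interior_measure_support_image frontier unfolding Ob_def S_def .
  ultimately show ?thesis
    by (intro bexI[of _ \<psi>]) (auto simp: h_def elim: AE_mp)
qed

lemma BCF_eq_if_factorization:
  fixes R :: "real^'k::finite^'p" and f g fs :: "real^'p \<Rightarrow> real" and \<psi> :: "real^'k \<Rightarrow> real"
  assumes [measurable]: "f \<in> borel_measurable borel" "g \<in> borel_measurable borel"
    and \<psi>: "\<psi> \<in> borel_measurable borel"
    and BCF: "is_BCF P f0 g0 R fs"
    and eq: "AE w in P. f0 (obsX w) + g0 (obsV w) = f (obsX w) + g (obsV w)"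
    and factor: "AE w in P. f0 (obsX w) - f (obsX w) = \<psi> (transpose R *v obsX w)"
  shows "AE w in P. fs (obsX w) = f (obsX w) + cond_exp_given P (\<lambda>w. transpose R *v obsX w) (\<lambda>w. g (obsV w)) w"
proof -
  let ?W = "\<lambda>w. transpose R *v obsX w"
  let ?G = "vimage_algebra UNIV ?W (borel :: (real^'k) measure)"
  have sigma_finite: "sigma_finite_subalgebra P ?G"
    by (rule sigma_finite_subalgebra_P) measurable
  then interpret sigma_finite_subalgebra P ?G .
  have "?W \<in> ?G \<rightarrow>\<^sub>M borel"
    by (rule measurable_vimage_algebra1) simp
  from measurable_compose[OF this \<psi>]
  have "(\<lambda>w. \<psi> (?W w)) \<in> borel_measurable ?G" .
  with integrable_g0_V
  have "AE w in P. real_cond_exp P ?G (\<lambda>w. g0 (obsV w) + \<psi> (?W w)) w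
      = real_cond_exp P ?G (\<lambda>w. g0 (obsV w)) w + \<psi> (?W w)"
    by (rule real_cond_exp_add_borel_measurable[OF P.prob_space_axioms sigma_finite])
  moreover have "AE w in P. g (obsV w) = g0 (obsV w) + \<psi> (?W w)"
    using eq factor by eventually_elim linarith
  then have "AE w in P. real_cond_exp P ?G (\<lambda>w. g (obsV w)) w
      = real_cond_exp P ?G (\<lambda>w. g0 (obsV w) + \<psi> (?W w)) w"
    by (rule real_cond_exp_cong) (use \<psi> in measurable)
  moreover have "AE w in P. fs (obsX w) = f0 (obsX w) + real_cond_exp P ?G (\<lambda>w. g0 (obsV w)) w"
    using BCF unfolding is_BCF_def cond_exp_given_def space_P .
  ultimately show ?thesis
    using factor unfolding cond_exp_given_def space_P by eventually_elim linarith
qed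

lemma BCF_identifiableI:
  fixes R :: "real^'k::finite^'p" and F G :: "(real^'p \<Rightarrow> real) set" and fs :: "real^'p \<Rightarrow> real"
  assumes R: "valid_R M R" and BCF: "is_BCF P f0 g0 R fs"
    and "F \<subseteq> borel_measurable borel" "G \<subseteq> borel_measurable borel"
    and factorization: "\<And>f g. f \<in> F \<Longrightarrow> g \<in> G \<Longrightarrow>
      AE w in P. f0 (obsX w) + g0 (obsV w) = f (obsX w) + g (obsV w) \<Longrightarrow>
      \<exists>\<psi>\<in>borel_measurable borel. AE w in P. f0 (obsX w) - f (obsX w) = \<psi> (transpose R *v obsX w)"
  shows "BCF_identifiable P M R F G fs"
  unfolding BCF_identifiable_def
proof (intro ballI impI)
  fix f g assume "f \<in> F" "g \<in> G"
    and H: "AE w in P. cond_exp_given P (\<lambda>w. (obsX w, obsV w)) obsY w = f (obsX w) + g (obsV w)"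
  from cond_exp_obsY_given_XV H
  have eq: "AE w in P. f0 (obsX w) + g0 (obsV w) = f (obsX w) + g (obsV w)"
    by eventually_elim simp
  have [measurable]: "f \<in> borel_measurable borel" "g \<in> borel_measurable borel"
    using \<open>f \<in> F\<close> \<open>g \<in> G\<close> assms(3,4) by auto
  obtain \<psi> where \<psi>: "\<psi> \<in> borel_measurable borel"
    and factor: "AE w in P. f0 (obsX w) - f (obsX w) = \<psi> (transpose R *v obsX w)"
    using factorization[OF \<open>f \<in> F\<close> \<open>g \<in> G\<close> eq] by blast
  have BCF_eq: "AE w in P. fs (obsX w) = f (obsX w)
      + cond_exp_given P (\<lambda>w. transpose R *v obsX w) (\<lambda>w. g (obsV w)) w"
    by (rule BCF_eq_if_factorization[OF _ _ \<psi> BCF eq factor]) measurable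
  show "if rank M < CARD('p)
      then AE w in P. fs (obsX w) = f (obsX w) + cond_exp_given P (\<lambda>w. transpose R *v obsX w) (\<lambda>w. g (obsV w)) w
      else AE w in P. fs (obsX w) = f (obsX w) + (\<integral>w'. g (obsV w') \<partial>P)"
  proof (cases "rank M < CARD('p)")
    case False
    \<comment> \<open>R = 0: conditioning on a constant is taking the expectation\<close>
    then have "R = 0" using R by (simp add: valid_R_def)
    have "integrable P (\<lambda>w. g0 (obsV w) + \<psi> 0)"
      by (rule Bochner_Integration.integrable_add[OF integrable_g0_V P.integrable_const])
    moreover have "(\<lambda>w. g (obsV w)) \<in> borel_measurable P"
      by measurable
    moreover have "AE w in P. g0 (obsV w) + \<psi> 0 = g (obsV w)"
      using eq factor by eventually_elim (simp add: \<open>R = 0\<close>)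
    ultimately have "integrable P (\<lambda>w. g (obsV w))"
      by (rule integrable_cong_AE_imp)
    then have "AE w in P. cond_exp_given P (\<lambda>w. transpose R *v obsX w) (\<lambda>w. g (obsV w)) w
        = (\<integral>w'. g (obsV w') \<partial>P)"
      unfolding cond_exp_given_def
      by (intro real_cond_exp_vimage_algebra_const[OF P.prob_space_axioms]) (simp add: \<open>R = 0\<close>)
    with BCF_eq have "AE w in P. fs (obsX w) = f (obsX w) + (\<integral>w'. g (obsV w') \<partial>P)"
      by eventually_elim simp
    with False show ?thesis by simp
  qed (use BCF_eq in simp)
qed

end

lemma simdg_trainingI:
  assumes simdg: "is_SIMDG f0 M0 Lam Q0"
    and bdd: "(SUP Q\<in>Q0. \<integral>\<^sup>+ w. ennreal ((f0 (obsX w))\<^sup>2) \<partial>(induced_dist f0 M0 Lam Q)) < \<infinity>"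
    and "Qtr \<in> Q0" and "is_gamma0 (induced_dist f0 M0 Lam Qtr) g0"
  shows "simdg_training f0 M0 Lam Qtr g0"
proof (rule simdg_training.intro)
  show f0 [measurable]: "f0 \<in> borel_measurable borel" and "prob_space Lam" "sets Lam = sets borel"
    and "prob_space Qtr" "sets Qtr = sets borel"
    using simdg \<open>Qtr \<in> Q0\<close> by (auto simp: is_SIMDG_def)
  show "integrable Lam fst"
    using simdg integrable_bounded_linear[OF bounded_linear_fst] by (auto simp: is_SIMDG_def)
  let ?P = "induced_dist f0 M0 Lam Qtr"
  show "integrable ?P (\<lambda>w. (f0 (obsX w))\<^sup>2)"
  proof (rule integrableI_bounded)
    have "(\<lambda>w. (f0 (obsX w))\<^sup>2) \<in> borel_measurable borel"
      by measurable
    then show "(\<lambda>w. (f0 (obsX w))\<^sup>2) \<in> borel_measurable ?P"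
      by (simp add: induced_dist_def)
    have "(\<integral>\<^sup>+ w. ennreal ((f0 (obsX w))\<^sup>2) \<partial>?P)
        \<le> (SUP Q\<in>Q0. \<integral>\<^sup>+ w. ennreal ((f0 (obsX w))\<^sup>2) \<partial>(induced_dist f0 M0 Lam Q))"
      by (rule SUP_upper[OF \<open>Qtr \<in> Q0\<close>])
    with bdd show "(\<integral>\<^sup>+ w. ennreal (norm ((f0 (obsX w))\<^sup>2)) \<partial>?P) < \<infinity>" by simp
  qed
qed (fact \<open>is_gamma0 (induced_dist f0 M0 Lam Qtr) g0\<close>)

theorem proposition3:
  fixes f0 :: "real^'p::finite \<Rightarrow> real"
    and M0 :: "real^'r::finite^'p"
    and Lam :: "(real \<times> (real^'p)) measure"
    and Q0 :: "(real^'r) measure set"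
    and Qtr :: "(real^'r) measure"
    and g0 :: "real^'p \<Rightarrow> real"
    and R :: "real^'k::finite^'p"
    and fs :: "real^'p \<Rightarrow> real"
  assumes simdg: "is_SIMDG f0 M0 Lam Q0"
    and bdd: "(SUP Q\<in>Q0. \<integral>\<^sup>+ w. ennreal ((f0 (obsX w))\<^sup>2) \<partial>(induced_dist f0 M0 Lam Q)) < \<infinity>"
    and Qtr: "Qtr \<in> Q0"
    and Z_mean: "integrable Qtr (\<lambda>z. z)" "(\<integral>z. z \<partial>Qtr) = 0"
    and Z_mom: "integrable Qtr (\<lambda>z. norm z ^ 2)" "pos_def_matrix (second_moment_matrix Qtr)"
    and gamma0: "is_gamma0 (induced_dist f0 M0 Lam Qtr) g0"
    and R: "valid_R M0 R"
    and BCF: "is_BCF (induced_dist f0 M0 Lam Qtr) f0 g0 R fs"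
  shows "(condition_A (induced_dist f0 M0 Lam Qtr) M0 g0 \<longrightarrow>
            BCF_identifiable (induced_dist f0 M0 Lam Qtr) M0 R
              (borel_measurable borel) {g. linear g} fs)
       \<and> (condition_B (induced_dist f0 M0 Lam Qtr) f0 g0 \<longrightarrow>
            BCF_identifiable (induced_dist f0 M0 Lam Qtr) M0 R
              differentiable_fns differentiable_fns fs)"
proof -
  interpret simdg_training f0 M0 Lam Qtr g0
    using simdg bdd Qtr gamma0 by (rule simdg_trainingI)
  have linear_measurable: "{g :: real^'p \<Rightarrow> real. linear g} \<subseteq> borel_measurable borel"
    by (intro subsetI) (simp add: borel_measurable_linear)
  have differentiable_measurable: "(differentiable_fns :: (real^'p \<Rightarrow> real) set) \<subseteq> borel_measurable borel"
    by (intro subsetI borel_measurable_continuous_onI continuous_on_differentiable_fns)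
  show ?thesis
  proof (intro conjI impI)
    assume A: "condition_A (induced_dist f0 M0 Lam Qtr) M0 g0"
    show "BCF_identifiable (induced_dist f0 M0 Lam Qtr) M0 R (borel_measurable borel) {g. linear g} fs"
      by (rule BCF_identifiableI[OF R BCF subset_refl linear_measurable],
          rule factorization_condition_A[OF A R]) simp_all
  next
    assume B: "condition_B (induced_dist f0 M0 Lam Qtr) f0 g0"
    show "BCF_identifiable (induced_dist f0 M0 Lam Qtr) M0 R differentiable_fns differentiable_fns fs"
      by (rule BCF_identifiableI[OF R BCF differentiable_measurable differentiable_measurable],
          rule factorization_condition_B[OF B R])
  qed
qed

end
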